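(* Let ${\cal G}(\vec{V})$ be an acyclic directed mixed graph (ADMG) on a finite vertex set $\vec{V}$, and let $\vec{Y},\vec{A}\subseteq \vec{V}$ be disjoint sets. Given $p(\vec{Y}\mid \text{do}(\vec{a}))$ and ${\cal G}(\vec{V})$ as inputs, the ID algorithm fails if and only if any one of the following conditions holds: (1) There exists a hedge for $p(\vec{Y}\mid\text{do}(\vec{a}))$ in ${\cal G}(\vec{V})$. (2) Some district $\vec{D}\in{\cal D}({\cal G}_{\vec{Y}^*})$ is not intrinsic in ${\cal G}(\vec{V})$. (3) There exists a district $\vec{D}\in{\cal D}({\cal G}_{\vec{Y}^*})$ such that $\vec{D}\subsetneq \langle \vec{D}\rangle_{{\cal G}(\vec{V})}$.
   Context: An ADMG is a graph with directed edges ($\to$) and bidirected edges ($\leftrightarrow$) and no directed cycles. A set of vertices is bidirected connected if any two of its elements are joined by a path of bidirected edges using only vertices of the set; a district of a graph is a maximal bidirected connected set of its vertices, and ${\cal D}({\cal H})$ denotes the set of districts of a graph ${\cal H}$. $\vec{Y}^*$ is the set of vertices $V\in\vec{V}$ such that there is a directed path (possibly of length zero) from $V$ to some element of $\vec{Y}$ that does not intersect $\vec{A}$; ${\cal G}_{\vec{Y}^*}$ is the subgraph of ${\cal G}(\vec{V})$ induced on $\vec{Y}^*$. Conditional ADMGs and fixing: a CADMG ${\cal G}(\vec{R},\vec{S})$ has random vertices $\vec{R}$ and fixed vertices $\vec{S}$ (fixed vertices have no edges with arrowheads into them); ${\cal G}(\vec{V})$ is the CADMG with $\vec{S}=\emptyset$.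 A random vertex $R$ is fixable in ${\cal G}(\vec{R},\vec{S})$ if there is no other vertex $W$ such that both there is a directed path from $R$ to $W$ and a bidirected path from $R$ to $W$ in ${\cal G}(\vec{R},\vec{S})$. For fixable $R$, the fixing operator $\phi_R$ produces the CADMG ${\cal G}(\vec{R}\setminus\{R\},\vec{S}\cup\{R\})$ obtained by removing all edges with arrowheads into $R$. A sequence $\langle J_1,\ldots,J_k\rangle$ of distinct random vertices is valid in ${\cal G}(\vec{R},\vec{S})$ if it is empty, or $J_1$ is fixable in ${\cal G}(\vec{R},\vec{S})$ and $\langle J_2,\ldots,J_k\rangle$ is valid in $\phi_{J_1}({\cal G}(\vec{R},\vec{S}))$. A set $\vec{R}\subseteq\vec{V}$ is reachable in ${\cal G}(\vec{V})$ if there exists a sequence consisting of all elements of $\vec{V}\setminus\vec{R}$ that is valid in ${\cal G}(\vec{V})$; it is intrinsic if it is reachable and bidirected connected. For a set $\vec{S}\subseteq\vec{V}$, the reachable closure $\langle\vec{S}\rangle_{{\cal G}(\vec{V})}$ is the unique smallest reachable superset of $\vec{S}$. Hedges: for a set $\vec{R}$, an $\vec{R}$-rooted C-forest is a bidirected connected set $\vec{F}$ of vertices of ${\cal G}(\vec{V})$ with $\vec{R}\subseteq\vec{F}$ such that there is a subgraph of ${\cal G}(\vec{V})$ with vertex set $\vec{F}$ and a subset of the edges among $\vec{F}$ in which every element of $\vec{F}$ has a directed path (possibly trivial) to an element of $\vec{R}$. A hedge for $p(\vec{Y}\mid\text{do}(\vec{a}))$ in ${\cal G}(\vec{V})$ is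 a pair of $\vec{R}$-rooted C-forests $\vec{F},\vec{F}'$ with $\vec{F}\subsetneq\vec{F}'$, $\vec{F}\cap\vec{A}=\emptyset$, $\vec{A}\cap(\vec{F}'\setminus\vec{F})\neq\emptyset$, and $\vec{R}$ ancestral to $\vec{Y}$ via directed paths that do not intersect $\vec{A}$. The ID algorithm, on input $p(\vec{Y}\mid\text{do}(\vec{a}))$ and ${\cal G}(\vec{V})$, writes $p(\vec{Y}\mid\text{do}(\vec{a}))=\sum_{\vec{Y}^*\setminus\vec{Y}}\prod_{\vec{D}\in{\cal D}({\cal G}_{\vec{Y}^*})}p(\vec{D}\mid\text{do}(\vec{s}_{\vec{D}}))$ (with $\vec{s}_{\vec{D}}$ values of the parents of $\vec{D}$ outside $\vec{D}$) and, for each district $\vec{D}\in{\cal D}({\cal G}_{\vec{Y}^*})$, attempts to identify the term $p(\vec{D}\mid\text{do}(\vec{s}_{\vec{D}}))$ by finding a sequence of all elements of $\vec{V}\setminus\vec{D}$ valid in ${\cal G}(\vec{V})$ (and applying the corresponding fixing operations to $p(\vec{V})$). It fails if for some such district no valid sequence exists. *)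

theory Defs
  imports Main
begin

text \<open>An ADMG on vertex set V with directed edges Di (pairs (a,b) meaning a -> b)
  and bidirected edges Bi (symmetric; (a,b) meaning a <-> b).\<close>
definition admg :: "'v set \<Rightarrow> ('v \<times> 'v) set \<Rightarrow> ('v \<times> 'v) set \<Rightarrow> bool" where
  "admg V Di Bi \<longleftrightarrow> finite V \<and> Di \<subseteq> V \<times> V \<and> Bi \<subseteq> V \<times> V \<and> sym Bi
     \<and> (\<forall>v. (v, v) \<notin> Bi) \<and> acyclic Di"

definition bidir_connected :: "('v \<times> 'v) set \<Rightarrow> 'v set \<Rightarrow> bool" where
  "bidir_connected Bi X \<longleftrightarrow> (\<forall>a\<in>X. \<forall>b\<in>X. (a, b) \<in> (Bi \<inter> (X \<times> X))\<^sup>*)"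

definition districts :: "'v set \<Rightarrow> ('v \<times> 'v) set \<Rightarrow> 'v set set" where
  "districts U Bi = {D. D \<subseteq> U \<and> D \<noteq> {} \<and> bidir_connected (Bi \<inter> (U \<times> U)) D \<and>
      (\<forall>D'. D \<subseteq> D' \<and> D' \<subseteq> U \<and> bidir_connected (Bi \<inter> (U \<times> U)) D' \<longrightarrow> D' = D)}"

definition ystar :: "'v set \<Rightarrow> ('v \<times> 'v) set \<Rightarrow> 'v set \<Rightarrow> 'v set \<Rightarrow> 'v set" where
  "ystar V Di Y A = {v \<in> V - A. \<exists>y\<in>Y. (v, y) \<in> (Di \<inter> ((V - A) \<times> (V - A)))\<^sup>*}"

text \<open>CADMG: (random vertices R, fixed vertices S, directed edges, bidirected edges).\<close>
type_synonym 'v cadmg = "'v set \<times> 'v set \<times> ('v \<times> 'v) set \<times> ('v \<times> 'v) set"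

definition fixable :: "'v cadmg \<Rightarrow> 'v \<Rightarrow> bool" where
  "fixable G r = (case G of (R, S, Di, Bi) \<Rightarrow>
     r \<in> R \<and> \<not> (\<exists>w. w \<noteq> r \<and> (r, w) \<in> Di\<^sup>* \<and> (r, w) \<in> Bi\<^sup>*))"

definition fix_op :: "'v \<Rightarrow> 'v cadmg \<Rightarrow> 'v cadmg" where
  "fix_op r G = (case G of (R, S, Di, Bi) \<Rightarrow>
     (R - {r}, insert r S, {(a, b) \<in> Di. b \<noteq> r}, {(a, b) \<in> Bi. a \<noteq> r \<and> b \<noteq> r}))"

fun valid_seq :: "'v cadmg \<Rightarrow> 'v list \<Rightarrow> bool" where
  "valid_seq G [] = True"
| "valid_seq G (j # js) = (fixable G j \<and> valid_seq (fix_op j G) js)"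

definition reachable :: "'v set \<Rightarrow> ('v \<times> 'v) set \<Rightarrow> ('v \<times> 'v) set \<Rightarrow> 'v set \<Rightarrow> bool" where
  "reachable V Di Bi R \<longleftrightarrow> R \<subseteq> V \<and>
     (\<exists>js. distinct js \<and> set js = V - R \<and> valid_seq (V, {}, Di, Bi) js)"

definition intrinsic :: "'v set \<Rightarrow> ('v \<times> 'v) set \<Rightarrow> ('v \<times> 'v) set \<Rightarrow> 'v set \<Rightarrow> bool" where
  "intrinsic V Di Bi R \<longleftrightarrow> reachable V Di Bi R \<and> bidir_connected Bi R"

definition reach_closure :: "'v set \<Rightarrow> ('v \<times> 'v) set \<Rightarrow> ('v \<times> 'v) set \<Rightarrow> 'v set \<Rightarrow> 'v set" where
  "reach_closure V Di Bi S = (THE R. reachable V Di Bi R \<and> S \<subseteq> R \<and>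
     (\<forall>R'. reachable V Di Bi R' \<and> S \<subseteq> R' \<longrightarrow> R \<subseteq> R'))"

definition c_forest :: "'v set \<Rightarrow> ('v \<times> 'v) set \<Rightarrow> ('v \<times> 'v) set \<Rightarrow> 'v set \<Rightarrow> 'v set \<Rightarrow> bool" where
  "c_forest V Di Bi R F \<longleftrightarrow> F \<subseteq> V \<and> R \<subseteq> F \<and> bidir_connected Bi F \<and>
     (\<exists>E. E \<subseteq> Di \<inter> (F \<times> F) \<and> (\<forall>f\<in>F. \<exists>r\<in>R. (f, r) \<in> E\<^sup>*))"

definition has_hedge :: "'v set \<Rightarrow> ('v \<times> 'v) set \<Rightarrow> ('v \<times> 'v) set \<Rightarrow> 'v set \<Rightarrow> 'v set \<Rightarrow> bool" where
  "has_hedge V Di Bi Y A \<longleftrightarrow> (\<exists>R F F'. c_forest V Di Bi R F \<and> c_forest V Di Bi R F' \<and>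
     F \<subset> F' \<and> F \<inter> A = {} \<and> A \<inter> (F' - F) \<noteq> {} \<and> R \<subseteq> ystar V Di Y A)"

definition id_fails :: "'v set \<Rightarrow> ('v \<times> 'v) set \<Rightarrow> ('v \<times> 'v) set \<Rightarrow> 'v set \<Rightarrow> 'v set \<Rightarrow> bool" where
  "id_fails V Di Bi Y A \<longleftrightarrow> (\<exists>D \<in> districts (ystar V Di Y A) Bi.
     \<not> (\<exists>js. distinct js \<and> set js = V - D \<and> valid_seq (V, {}, Di, Bi) js))"

end

(* Everything reduces to reachability of the districts D of G_{Y*}: the ID algorithm fails
   exactly when one of them is not reachable.

   Fixing is monotone under taking induced subgraphs: a vertex fixable in G(K) stays fixable
   after all of V - K has been fixed, and the first vertex of K fixed by any valid sequence is
   already fixable in G(K).  Hence a reachable R containing D in which no vertex of R - D is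
   fixable is the reachable closure of D; by acyclicity every vertex of such an R reaches D by
   directed and by bidirected paths inside R, so R is a D-rooted C-forest.  If D is not
   reachable, R is strictly larger than D and must meet A, for otherwise R would lie in Y* and
   enlarge the district D; thus D and R form a hedge.  Conversely, no non-root vertex of a
   C-forest is fixable in it, so if F and F' form a hedge, the district D containing F cannot
   be reached: the vertices of F' - D could never be fixed. *)

theory Submission
  imports Defs
begin

definition induced :: "'v set \<Rightarrow> ('v \<times> 'v) set \<Rightarrow> ('v \<times> 'v) set \<Rightarrow> 'v cadmg" where
  "induced K Di Bi = (K, {}, Di \<inter> K \<times> K, Bi \<inter> K \<times> K)"

lemma fixable_induced:
  "fixable (induced K Di Bi) j \<longleftrightarrow> j \<in> K \<and>
     \<not> (\<exists>w. w \<noteq> j \<and> (j, w) \<in> (Di \<inter> K \<times> K)\<^sup>* \<and> (j, w) \<in> (Bi \<inter> K \<times> K)\<^sup>*)"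
  by (simp add: induced_def fixable_def)

lemma fixable_edge_subset:
  assumes "fixable (R, S, Di, Bi) j" "j \<in> R'" "Di' \<subseteq> Di" "Bi' \<subseteq> Bi"
  shows "fixable (R', S', Di', Bi') j"
  using assms rtrancl_mono[OF assms(3)] rtrancl_mono[OF assms(4)]
  unfolding fixable_def by blast

lemma fold_fix_op:
  "fold fix_op js (R, S, Di, Bi) = (R - set js, set js \<union> S, {(a, b) \<in> Di. b \<notin> set js},
      {(a, b) \<in> Bi. a \<notin> set js \<and> b \<notin> set js})"
  by (induction js arbitrary: R S Di Bi) (auto simp: fix_op_def)

lemma valid_seq_append:
  "valid_seq G (xs @ ys) \<longleftrightarrow> valid_seq G xs \<and> valid_seq (fold fix_op xs G) ys"
  by (induction xs arbitrary: G) auto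

lemma valid_seq_first_fixable_induced:
  assumes "valid_seq (R, S, Di, Bi) js" "set js \<inter> K \<noteq> {}"
  obtains j where "j \<in> set js" "fixable (induced K Di Bi) j"
proof -
  obtain xs j ys where js: "js = xs @ j # ys" "j \<in> K" "\<forall>x\<in>set xs. x \<notin> K"
    using split_list_first_prop[of js "\<lambda>x. x \<in> K"] assms(2) by blast
  then have "fixable (fold fix_op xs (R, S, Di, Bi)) j"
    using assms(1) by (simp add: valid_seq_append)
  then have "fixable (induced K Di Bi) j"
    unfolding fold_fix_op induced_def by (rule fixable_edge_subset) (use js(2,3) in auto)
  moreover have "j \<in> set js" using js(1) by simp
  ultimately show thesis by (rule that[rotated])
qed

lemma rtrancl_restrict_head_notin:
  assumes "(j, w) \<in> {(a, b) \<in> Di. b \<notin> X}\<^sup>*" "j \<in> V - X" "Di \<subseteq> V \<times> V"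
  shows "(j, w) \<in> (Di \<inter> (V - X) \<times> (V - X))\<^sup>* \<and> w \<in> V - X"
  using assms(1)
proof (induction rule: rtrancl_induct)
  case (step y z)
  with assms(3) have "(y, z) \<in> Di \<inter> (V - X) \<times> (V - X)" by auto
  with step.IH show ?case by (auto intro: rtrancl_into_rtrancl)
qed (use assms(2) in simp)

lemma fixable_fold_fix_op:
  assumes "Di \<subseteq> V \<times> V" "Bi \<subseteq> V \<times> V" "fixable (induced (V - set js) Di Bi) j"
  shows "fixable (fold fix_op js (V, {}, Di, Bi)) j"
proof -
  let ?K = "V - set js"
  have j: "j \<in> ?K" using assms(3) by (simp add: fixable_induced)
  have Bi_sub: "{(a, b) \<in> Bi. a \<notin> set js \<and> b \<notin> set js} \<subseteq> Bi \<inter> ?K \<times> ?K"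
    using assms(2) by auto
  have "\<not> (\<exists>w. w \<noteq> j \<and> (j, w) \<in> {(a, b) \<in> Di. b \<notin> set js}\<^sup>* \<and>
      (j, w) \<in> {(a, b) \<in> Bi. a \<notin> set js \<and> b \<notin> set js}\<^sup>*)"
    using assms(3) rtrancl_restrict_head_notin[OF _ j assms(1), THEN conjunct1] rtrancl_mono[OF Bi_sub]
    unfolding fixable_induced by blast
  with j show ?thesis by (simp add: fold_fix_op fixable_def)
qed

lemma reachable_self: "reachable V Di Bi V"
  by (auto simp: reachable_def intro: exI[of _ "[]"])

lemma reachable_Diff_fixable:
  assumes "Di \<subseteq> V \<times> V" "Bi \<subseteq> V \<times> V" "reachable V Di Bi R" "fixable (induced R Di Bi) j"
  shows "reachable V Di Bi (R - {j})"
proof -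
  obtain js where js: "distinct js" "set js = V - R" "valid_seq (V, {}, Di, Bi) js" "R \<subseteq> V"
    using assms(3) unfolding reachable_def by blast
  have "R = V - set js" using js(2,4) by blast
  then have "fixable (fold fix_op js (V, {}, Di, Bi)) j"
    using fixable_fold_fix_op[OF assms(1,2)] assms(4) by simp
  then have "valid_seq (V, {}, Di, Bi) (js @ [j])"
    using js(3) by (simp add: valid_seq_append)
  moreover have "j \<in> R" using assms(4) by (simp add: fixable_induced)
  ultimately show ?thesis
    using js unfolding reachable_def by (intro conjI exI[of _ "js @ [j]"]) auto
qed

lemma ex_reachable_superset_no_fixable:
  assumes "finite V" "Di \<subseteq> V \<times> V" "Bi \<subseteq> V \<times> V" "D \<subseteq> V"
  obtains R where "reachable V Di Bi R" "D \<subseteq> R" "\<forall>j\<in>R - D. \<not> fixable (induced R Di Bi) j"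
proof -
  let ?P = "\<lambda>R. reachable V Di Bi R \<and> D \<subseteq> R"
  obtain R where R: "?P R" and min: "\<And>R'. ?P R' \<Longrightarrow> card R \<le> card R'"
    using ex_has_least_nat[of ?P V card] reachable_self assms(4) by blast
  have "finite R" using R assms(1) finite_subset unfolding reachable_def by blast
  have "\<not> fixable (induced R Di Bi) j" if "j \<in> R - D" for j
  proof
    assume "fixable (induced R Di Bi) j"
    then have "?P (R - {j})" using reachable_Diff_fixable[OF assms(2,3)] R that by blast
    with min have "card R \<le> card (R - {j})" by blast
    moreover have "card (R - {j}) < card R"
      using card_Diff1_less[OF \<open>finite R\<close>] that by blast
    ultimately show False by linarith
  qed
  with R that show thesis by blast
qed

lemma reachable_superset_if_no_fixable:
  assumes "D \<subseteq> R" "R \<subseteq> V" "\<forall>j\<in>R - D. \<not> fixable (induced R Di Bi) j"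
    and "reachable V Di Bi R'" "D \<subseteq> R'"
  shows "R \<subseteq> R'"
proof (rule ccontr)
  assume "\<not> R \<subseteq> R'"
  obtain js where js: "set js = V - R'" "valid_seq (V, {}, Di, Bi) js"
    using assms(4) unfolding reachable_def by blast
  with \<open>\<not> R \<subseteq> R'\<close> assms(2) have "set js \<inter> R \<noteq> {}" by blast
  then obtain j where "j \<in> set js" "fixable (induced R Di Bi) j"
    using valid_seq_first_fixable_induced[OF js(2)] by blast
  moreover from this have "j \<in> R - D" using js(1) assms(5) by (auto simp: fixable_induced)
  ultimately show False using assms(3) by blast
qed

lemma reach_closure_eq:
  assumes "reachable V Di Bi R" "D \<subseteq> R" "\<forall>j\<in>R - D. \<not> fixable (induced R Di Bi) j"
  shows "reach_closure V Di Bi D = R"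
  unfolding reach_closure_def
proof (rule the_equality)
  have "R \<subseteq> V" using assms(1) by (simp add: reachable_def)
  then show "reachable V Di Bi R \<and> D \<subseteq> R \<and>
      (\<forall>R'. reachable V Di Bi R' \<and> D \<subseteq> R' \<longrightarrow> R \<subseteq> R')"
    using assms reachable_superset_if_no_fixable[OF assms(2) \<open>R \<subseteq> V\<close> assms(3)] by blast
  then show "R' = R" if "reachable V Di Bi R' \<and> D \<subseteq> R' \<and>
      (\<forall>R''. reachable V Di Bi R'' \<and> D \<subseteq> R'' \<longrightarrow> R' \<subseteq> R'')" for R'
    using that by blast
qed

lemma psubset_reach_closure_iff:
  assumes "admg V Di Bi" "D \<subseteq> V"
  shows "D \<subset> reach_closure V Di Bi D \<longleftrightarrow> \<not> reachable V Di Bi D"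
proof -
  obtain R where R: "reachable V Di Bi R" "D \<subseteq> R" "\<forall>j\<in>R - D. \<not> fixable (induced R Di Bi) j"
    using ex_reachable_superset_no_fixable[of V Di Bi D] assms unfolding admg_def by blast
  have "R \<subseteq> V" using R(1) by (simp add: reachable_def)
  have "reachable V Di Bi D \<Longrightarrow> R \<subseteq> D"
    using reachable_superset_if_no_fixable[OF R(2) \<open>R \<subseteq> V\<close> R(3)] by blast
  then show ?thesis unfolding reach_closure_eq[OF R] using R(1,2) by auto
qed

(* Acyclicity makes "proper descendant" well-founded, and a vertex of K - D that is not
   fixable has a proper descendant in its own district of G(K). *)
lemma descends_to_roots_if_no_fixable:
  assumes "finite K" "acyclic Di" "\<forall>j\<in>K - D. \<not> fixable (induced K Di Bi) j" "v \<in> K"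
  shows "(\<exists>d\<in>D. (v, d) \<in> (Di \<inter> K \<times> K)\<^sup>*) \<and> (\<exists>d\<in>D. (v, d) \<in> (Bi \<inter> K \<times> K)\<^sup>*)"
proof -
  let ?Di = "Di \<inter> K \<times> K" and ?Bi = "Bi \<inter> K \<times> K"
  have "finite ?Di" using assms(1) by (simp add: finite_subset)
  moreover have "acyclic ?Di" using assms(2) acyclic_subset by blast
  ultimately have "wf ((?Di\<inverse>)\<^sup>+)" by (intro wf_trancl finite_acyclic_wf_converse)
  then show ?thesis using assms(4)
  proof (induction v rule: wf_induct_rule)
    case (less v)
    show ?case
    proof (cases "v \<in> D")
      case False
      with less.prems assms(3) obtain w where w: "w \<noteq> v" "(v, w) \<in> ?Di\<^sup>*" "(v, w) \<in> ?Bi\<^sup>*"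
        by (auto simp: fixable_induced)
      then have "(v, w) \<in> ?Di\<^sup>+" by (simp add: rtrancl_eq_or_trancl)
      then have "w \<in> K" and "(w, v) \<in> (?Di\<inverse>)\<^sup>+"
        using trancl_subset_Sigma[of ?Di K] by (auto simp: trancl_converse)
      with less.IH obtain d1 d2 where "d1 \<in> D" "(w, d1) \<in> ?Di\<^sup>*" "d2 \<in> D" "(w, d2) \<in> ?Bi\<^sup>*"
        by blast
      with rtrancl_trans[OF w(2)] rtrancl_trans[OF w(3)] show ?thesis by blast
    qed blast
  qed
qed

lemma c_forest_if_no_fixable:
  assumes "admg V Di Bi" "K \<subseteq> V" "D \<subseteq> K" "bidir_connected Bi D"
    and "\<forall>j\<in>K - D. \<not> fixable (induced K Di Bi) j"
  shows "c_forest V Di Bi D K"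
proof -
  have "finite K" "acyclic Di" "sym (Bi \<inter> K \<times> K)"
    using assms(1,2) finite_subset unfolding admg_def sym_def by auto
  note roots = descends_to_roots_if_no_fixable[OF this(1,2) assms(5)]
  have "(a, b) \<in> (Bi \<inter> K \<times> K)\<^sup>*" if ab: "a \<in> K" "b \<in> K" for a b
  proof -
    obtain da db where "da \<in> D" "(a, da) \<in> (Bi \<inter> K \<times> K)\<^sup>*" "db \<in> D" "(b, db) \<in> (Bi \<inter> K \<times> K)\<^sup>*"
      using roots[OF ab(1)] roots[OF ab(2)] by blast
    moreover have "(da, db) \<in> (Bi \<inter> K \<times> K)\<^sup>*"
      using assms(3,4) \<open>da \<in> D\<close> \<open>db \<in> D\<close> rtrancl_mono[of "Bi \<inter> D \<times> D" "Bi \<inter> K \<times> K"]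
      unfolding bidir_connected_def by blast
    moreover have "(db, b) \<in> (Bi \<inter> K \<times> K)\<^sup>*"
      using sym_rtrancl[OF \<open>sym (Bi \<inter> K \<times> K)\<close>] \<open>(b, db) \<in> _\<close> by (rule symD)
    ultimately show ?thesis by (meson rtrancl_trans)
  qed
  then have "bidir_connected Bi K" by (simp add: bidir_connected_def)
  with assms(2,3) roots show ?thesis
    unfolding c_forest_def by (intro conjI exI[of _ "Di \<inter> K \<times> K"]) auto
qed

lemma not_fixable_in_c_forest:
  assumes "c_forest V Di Bi R F" "j \<in> F - R"
  shows "\<not> fixable (induced F Di Bi) j"
proof -
  obtain E where E: "E \<subseteq> Di \<inter> F \<times> F" "\<forall>f\<in>F. \<exists>r\<in>R. (f, r) \<in> E\<^sup>*"
    and F: "bidir_connected Bi F" "R \<subseteq> F"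
    using assms(1) by (auto simp: c_forest_def)
  then obtain r where r: "r \<in> R" "(j, r) \<in> (Di \<inter> F \<times> F)\<^sup>*"
    using assms(2) rtrancl_mono by blast
  have "(j, r) \<in> (Bi \<inter> F \<times> F)\<^sup>*" using F assms(2) r(1) unfolding bidir_connected_def by blast
  moreover have "r \<noteq> j" using assms(2) r(1) by blast
  ultimately show ?thesis using r(2) unfolding fixable_induced by blast
qed

lemma not_reachable_if_c_forest_outside:
  assumes "c_forest V Di Bi R F" "R \<subseteq> D" "\<not> F \<subseteq> D"
  shows "\<not> reachable V Di Bi D"
proof
  assume "reachable V Di Bi D"
  then obtain js where js: "set js = V - D" "valid_seq (V, {}, Di, Bi) js"
    unfolding reachable_def by blast
  have "F \<subseteq> V" using assms(1) by (simp add: c_forest_def)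
  with js(1) assms(3) have "set js \<inter> F \<noteq> {}" by blast
  then obtain j where "j \<in> set js" "fixable (induced F Di Bi) j"
    using valid_seq_first_fixable_induced[OF js(2)] by blast
  moreover from this have "j \<in> F - R" using js(1) assms(2) by (auto simp: fixable_induced)
  ultimately show False using not_fixable_in_c_forest[OF assms(1)] by blast
qed

lemma bidir_connected_restrict:
  assumes "F \<subseteq> U"
  shows "bidir_connected (Bi \<inter> U \<times> U) F \<longleftrightarrow> bidir_connected Bi F"
proof -
  have "Bi \<inter> U \<times> U \<inter> F \<times> F = Bi \<inter> F \<times> F" using assms by blast
  then show ?thesis by (simp add: bidir_connected_def)
qed

lemma district_subset: "D \<in> districts U Bi \<Longrightarrow> D \<subseteq> U"
  by (simp add: districts_def)

lemma bidir_connected_district: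
  assumes "D \<in> districts U Bi"
  shows "bidir_connected Bi D"
  using assms bidir_connected_restrict[of D U Bi] by (simp add: districts_def)

lemma bidir_connected_Un:
  assumes "bidir_connected B X" "bidir_connected B Y" "X \<inter> Y \<noteq> {}"
  shows "bidir_connected B (X \<union> Y)"
  unfolding bidir_connected_def
proof (intro ballI)
  fix a b assume ab: "a \<in> X \<union> Y" "b \<in> X \<union> Y"
  obtain c where c: "c \<in> X" "c \<in> Y" using assms(3) by blast
  have mono: "(B \<inter> Z \<times> Z)\<^sup>* \<subseteq> (B \<inter> (X \<union> Y) \<times> (X \<union> Y))\<^sup>*" if "Z \<subseteq> X \<union> Y" for Z
    using that by (intro rtrancl_mono) blast
  have "(a, c) \<in> (B \<inter> (X \<union> Y) \<times> (X \<union> Y))\<^sup>*" "(c, b) \<in> (B \<inter> (X \<union> Y) \<times> (X \<union> Y))\<^sup>*"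
    using ab c assms(1,2) mono[of X] mono[of Y] unfolding bidir_connected_def by blast+
  then show "(a, b) \<in> (B \<inter> (X \<union> Y) \<times> (X \<union> Y))\<^sup>*" by (rule rtrancl_trans)
qed

lemma subset_district:
  assumes "D \<in> districts U Bi" "F \<subseteq> U" "bidir_connected Bi F" "F \<inter> D \<noteq> {}"
  shows "F \<subseteq> D"
proof -
  have "D \<subseteq> U" "bidir_connected Bi D"
    using assms(1) by (rule district_subset, rule bidir_connected_district)
  then have "bidir_connected (Bi \<inter> U \<times> U) (D \<union> F)"
    using assms(2-4) bidir_connected_Un bidir_connected_restrict[of "D \<union> F" U Bi] by blast
  then have "D \<union> F = D" using assms(1,2) \<open>D \<subseteq> U\<close> unfolding districts_def by blast
  then show ?thesis by blast
qed

lemma ex_district: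
  assumes "finite U" "u \<in> U"
  obtains D where "D \<in> districts U Bi" "u \<in> D"
proof -
  let ?P = "\<lambda>D. D \<subseteq> U \<and> u \<in> D \<and> bidir_connected (Bi \<inter> U \<times> U) D"
  have "?P {u}" using assms(2) by (simp add: bidir_connected_def)
  moreover have "\<forall>D. ?P D \<longrightarrow> card D < Suc (card U)"
    using card_mono[OF assms(1)] by (simp add: less_Suc_eq_le)
  ultimately obtain D where D: "?P D" and max: "\<And>D'. ?P D' \<Longrightarrow> card D' \<le> card D"
    using ex_has_greatest_nat[of ?P "{u}" card "Suc (card U)"] by auto
  have "D = D'" if "D \<subseteq> D'" "D' \<subseteq> U" "bidir_connected (Bi \<inter> U \<times> U) D'" for D'
  proof (rule card_subset_eq)
    show "finite D'" using that(2) assms(1) by (rule finite_subset)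
    have "?P D'" using that D by blast
    then show "card D = card D'" using max card_mono[OF \<open>finite D'\<close> that(1)] by (meson le_antisym)
  qed fact
  with D have "D \<in> districts U Bi" unfolding districts_def by blast
  with D that show thesis by blast
qed

lemma ystar_subset: "ystar V Di Y A \<subseteq> V - A"
  by (auto simp: ystar_def)

lemma district_ystar_subset: "D \<in> districts (ystar V Di Y A) Bi \<Longrightarrow> D \<subseteq> V - A"
  by (rule subset_trans[OF district_subset ystar_subset])

lemma c_forest_subset_ystar:
  assumes "c_forest V Di Bi R F" "F \<inter> A = {}" "R \<subseteq> ystar V Di Y A"
  shows "F \<subseteq> ystar V Di Y A"
proof
  fix f assume "f \<in> F"
  obtain E where E: "E \<subseteq> Di \<inter> F \<times> F" "\<forall>f\<in>F. \<exists>r\<in>R. (f, r) \<in> E\<^sup>*" and "F \<subseteq> V"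
    using assms(1) by (auto simp: c_forest_def)
  let ?DiA = "Di \<inter> (V - A) \<times> (V - A)"
  obtain r where r: "r \<in> R" "(f, r) \<in> E\<^sup>*" using E(2) \<open>f \<in> F\<close> by blast
  have "E \<subseteq> ?DiA" using E(1) \<open>F \<subseteq> V\<close> assms(2) by blast
  with r(2) have "(f, r) \<in> ?DiA\<^sup>*" using rtrancl_mono by blast
  moreover obtain y where "y \<in> Y" "(r, y) \<in> ?DiA\<^sup>*"
    using r(1) assms(3) unfolding ystar_def by blast
  moreover have "f \<in> V - A" using \<open>f \<in> F\<close> \<open>F \<subseteq> V\<close> assms(2) by blast
  ultimately show "f \<in> ystar V Di Y A"
    unfolding ystar_def using rtrancl_trans[of f r ?DiA y] by blast
qed

lemma has_hedge_if_district_not_reachable: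
  assumes "admg V Di Bi" "D \<in> districts (ystar V Di Y A) Bi" "\<not> reachable V Di Bi D"
  shows "has_hedge V Di Bi Y A"
proof -
  let ?U = "ystar V Di Y A"
  have "D \<subseteq> ?U" "D \<noteq> {}" using assms(2) by (simp_all add: districts_def)
  have "D \<subseteq> V" "D \<inter> A = {}" using district_ystar_subset[OF assms(2)] by blast+
  obtain R where R: "reachable V Di Bi R" "D \<subseteq> R" "\<forall>j\<in>R - D. \<not> fixable (induced R Di Bi) j"
    using ex_reachable_superset_no_fixable[of V Di Bi D] assms(1) \<open>D \<subseteq> V\<close>
    unfolding admg_def by blast
  have "R \<subseteq> V" using R(1) by (simp add: reachable_def)
  have "D \<noteq> R" using R(1) assms(3) by blast
  have forest_R: "c_forest V Di Bi D R"
    using c_forest_if_no_fixable[OF assms(1) \<open>R \<subseteq> V\<close> R(2) _ R(3)]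
      bidir_connected_district[OF assms(2)] by blast
  have forest_D: "c_forest V Di Bi D D"
    using \<open>D \<subseteq> V\<close> bidir_connected_district[OF assms(2)]
    unfolding c_forest_def by (auto intro!: exI[of _ "{}"])
  have "A \<inter> (R - D) \<noteq> {}"
  proof
    assume "A \<inter> (R - D) = {}"
    with \<open>D \<inter> A = {}\<close> have "R \<inter> A = {}" by blast
    then have "R \<subseteq> ?U" using c_forest_subset_ystar[OF forest_R _ \<open>D \<subseteq> ?U\<close>] by blast
    moreover have "bidir_connected Bi R" using forest_R by (simp add: c_forest_def)
    ultimately have "R \<subseteq> D" using subset_district[OF assms(2)] R(2) \<open>D \<noteq> {}\<close> by blast
    with R(2) have "D = R" by (rule subset_antisym)
    with \<open>D \<noteq> R\<close> show False ..
  qed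
  moreover have "D \<subset> R" using R(2) \<open>D \<noteq> R\<close> by (rule psubsetI)
  ultimately show ?thesis
    using forest_D forest_R \<open>D \<inter> A = {}\<close> \<open>D \<subseteq> ?U\<close> unfolding has_hedge_def
    by (intro exI[of _ D] exI[of _ D] exI[of _ R]) simp
qed

lemma district_not_reachable_if_has_hedge:
  assumes "admg V Di Bi" "has_hedge V Di Bi Y A"
  obtains D where "D \<in> districts (ystar V Di Y A) Bi" "\<not> reachable V Di Bi D"
proof -
  let ?U = "ystar V Di Y A"
  obtain R F F' where forest_F: "c_forest V Di Bi R F" and forest_F': "c_forest V Di Bi R F'"
    and "F \<inter> A = {}" "A \<inter> (F' - F) \<noteq> {}" "R \<subseteq> ?U"
    using assms(2) unfolding has_hedge_def by blast
  then obtain a where a: "a \<in> A" "a \<in> F'" by blast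
  then obtain r where "r \<in> R" using forest_F' unfolding c_forest_def by blast
  have "R \<subseteq> F" "bidir_connected Bi F" using forest_F by (simp_all add: c_forest_def)
  have "F \<subseteq> ?U" by (rule c_forest_subset_ystar) fact+
  have "finite ?U" using assms(1) ystar_subset[of V Di Y A] finite_subset
    unfolding admg_def by blast
  moreover have "r \<in> ?U" using \<open>r \<in> R\<close> \<open>R \<subseteq> ?U\<close> by blast
  ultimately obtain D where D: "D \<in> districts ?U Bi" "r \<in> D" by (rule ex_district)
  have "F \<subseteq> D"
    using subset_district[OF D(1) \<open>F \<subseteq> ?U\<close> \<open>bidir_connected Bi F\<close>] D(2) \<open>r \<in> R\<close> \<open>R \<subseteq> F\<close>
    by blast
  with \<open>R \<subseteq> F\<close> have "R \<subseteq> D" by (rule subset_trans)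
  moreover have "a \<notin> D" using district_ystar_subset[OF D(1)] a(1) by blast
  with a(2) have "\<not> F' \<subseteq> D" by blast
  ultimately have "\<not> reachable V Di Bi D" by (rule not_reachable_if_c_forest_outside[OF forest_F'])
  with D(1) show thesis by (rule that)
qed

lemma id_fails_iff_district_not_reachable:
  "id_fails V Di Bi Y A \<longleftrightarrow> (\<exists>D\<in>districts (ystar V Di Y A) Bi. \<not> reachable V Di Bi D)"
proof -
  have "D \<subseteq> V" if "D \<in> districts (ystar V Di Y A) Bi" for D
    using district_ystar_subset[OF that] by blast
  then show ?thesis unfolding id_fails_def reachable_def by blast
qed

theorem proposition1:
  fixes V Y A :: "'v set" and Di Bi :: "('v \<times> 'v) set"
  assumes "admg V Di Bi" and "Y \<subseteq> V" and "A \<subseteq> V" and "Y \<inter> A = {}"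
  shows "(id_fails V Di Bi Y A \<longleftrightarrow> has_hedge V Di Bi Y A)
       \<and> (id_fails V Di Bi Y A \<longleftrightarrow> (\<exists>D \<in> districts (ystar V Di Y A) Bi. \<not> intrinsic V Di Bi D))
       \<and> (id_fails V Di Bi Y A \<longleftrightarrow> (\<exists>D \<in> districts (ystar V Di Y A) Bi. D \<subset> reach_closure V Di Bi D))"
proof -
  let ?Ds = "districts (ystar V Di Y A) Bi"
  have "D \<subset> reach_closure V Di Bi D \<longleftrightarrow> \<not> reachable V Di Bi D" if "D \<in> ?Ds" for D
    using district_ystar_subset[OF that] by (intro psubset_reach_closure_iff[OF assms(1)]) blast
  moreover have "intrinsic V Di Bi D \<longleftrightarrow> reachable V Di Bi D" if "D \<in> ?Ds" for D
    using bidir_connected_district[OF that] by (simp add: intrinsic_def)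
  moreover have "has_hedge V Di Bi Y A \<longleftrightarrow> (\<exists>D\<in>?Ds. \<not> reachable V Di Bi D)"
    using has_hedge_if_district_not_reachable[OF assms(1)]
      district_not_reachable_if_has_hedge[OF assms(1)] by blast
  ultimately show ?thesis unfolding id_fails_iff_district_not_reachable by auto
qed

end
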